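(* Let $a,c\ge 1$ be integers with $a\neq c$. Then $U=\{(a,0),(c,0)\}\subseteq\mathcal{B}$ is unavoidable.
   Context: The bicyclic inverse semigroup is $\mathcal{B}=\{(a,b)\in\mathbb{Z}\times\mathbb{Z}\mid a\ge 0,\ a+b\ge 0\}$ with multiplication $(a,b)(c,d)=(\max\{c+d,a\}-d,\ b+d)$. A subset $U\subseteq\mathcal{B}$ is called avoidable if $\mathcal{B}$ can be partitioned into two subsets $A$ and $B$ such that no element of $U$ can be written as a product $xy$ of two distinct elements $x\neq y$ both in $A$, or both in $B$. A set is unavoidable if it is not avoidable. *)

theory Defs
  imports Main
begin

definition bicyclic :: "(int \<times> int) set" where
  "bicyclic = {(a, b). a \<ge> 0 \<and> a + b \<ge> 0}"

definition bmult :: "int \<times> int \<Rightarrow> int \<times> int \<Rightarrow> int \<times> int" where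
  "bmult x y = (case x of (a, b) \<Rightarrow> case y of (c, d) \<Rightarrow> (max (c + d) a - d, b + d))"

definition avoidable :: "(int \<times> int) set \<Rightarrow> bool" where
  "avoidable U \<longleftrightarrow> (\<exists>A B. A \<union> B = bicyclic \<and> A \<inter> B = {} \<and>
     (\<forall>x\<in>A. \<forall>y\<in>A. x \<noteq> y \<longrightarrow> bmult x y \<notin> U) \<and>
     (\<forall>x\<in>B. \<forall>y\<in>B. x \<noteq> y \<longrightarrow> bmult x y \<notin> U))"

definition unavoidable :: "(int \<times> int) set \<Rightarrow> bool" where
  "unavoidable U \<longleftrightarrow> \<not> avoidable U"

end

theory Submission
  imports Defs
begin

text \<open>The idempotents \<open>(n, 0)\<close> multiply by taking maxima, so the identity \<open>(0, 0)\<close>,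
  \<open>(a, 0)\<close> and \<open>(c, 0)\<close> form a triangle all of whose products lie in \<open>{(a, 0), (c, 0)}\<close>.
  Any partition of the bicyclic semigroup into two parts puts two vertices of this
  triangle into the same part.\<close>

lemma bmult_idempotents: "bmult (m, 0) (n, 0) = (max m n, 0)"
  by (simp add: bmult_def max.commute)

lemma unavoidable_if_triangle:
  assumes "x \<in> bicyclic" "y \<in> bicyclic" "z \<in> bicyclic"
    and "x \<noteq> y" "y \<noteq> z" "x \<noteq> z"
    and "bmult x y \<in> U" "bmult y z \<in> U" "bmult x z \<in> U"
  shows "unavoidable U"
  unfolding unavoidable_def avoidable_def
proof
  assume "\<exists>A B. A \<union> B = bicyclic \<and> A \<inter> B = {} \<and>
     (\<forall>x\<in>A. \<forall>y\<in>A. x \<noteq> y \<longrightarrow> bmult x y \<notin> U) \<and>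
     (\<forall>x\<in>B. \<forall>y\<in>B. x \<noteq> y \<longrightarrow> bmult x y \<notin> U)"
  then obtain A B where cover: "A \<union> B = bicyclic"
    and free_A: "\<forall>x\<in>A. \<forall>y\<in>A. x \<noteq> y \<longrightarrow> bmult x y \<notin> U"
    and free_B: "\<forall>x\<in>B. \<forall>y\<in>B. x \<noteq> y \<longrightarrow> bmult x y \<notin> U"
    by blast
  have "x \<in> A \<or> x \<in> B" "y \<in> A \<or> y \<in> B" "z \<in> A \<or> z \<in> B"
    using assms(1-3) cover by blast+
  then show False
    using free_A free_B assms(4-9) by metis
qed

theorem corollary5p2:
  fixes a c :: int
  assumes "a \<ge> 1" and "c \<ge> 1" and "a \<noteq> c"
  shows "unavoidable {(a, 0), (c, 0)}"
proof (rule unavoidable_if_triangle[of "(0, 0)" "(a, 0)" "(c, 0)"])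
  show "(0, 0) \<in> bicyclic" "(a, 0) \<in> bicyclic" "(c, 0) \<in> bicyclic"
    using assms by (auto simp: bicyclic_def)
  show "(0, 0) \<noteq> (a, 0)" "(a, 0) \<noteq> (c, 0)" "(0, 0) \<noteq> (c, 0)"
    using assms by auto
  show "bmult (0, 0) (a, 0) \<in> {(a, 0), (c, 0)}"
    "bmult (a, 0) (c, 0) \<in> {(a, 0), (c, 0)}"
    "bmult (0, 0) (c, 0) \<in> {(a, 0), (c, 0)}"
    using assms by (auto simp: bmult_idempotents max_def)
qed

end
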